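(* For every $n\ge1$, the number of SR states on $K_n^0$ equals the number of integer lattice points in the parking function polytope $\mathrm{conv}(\mathrm{PF}_n)\subset\mathbb{R}^n$.
   Context: $K_n^0$ is the complete graph on vertex set $\{0,1,\dots,n\}$ with sink $0$; every vertex has degree $n$. A configuration is $c\in\mathbb{Z}_{\ge0}^n$, stable if $c_i\le n-1$ for all $i$. SSM (parameter $p\in(0,1)$): an unstable vertex $i$, independently for each incident edge, sends one grain along it with probability $p$ (grains to the sink disappear), otherwise keeps it. The SSM Markov chain on stable configurations adds a grain at vertex $i$ with probability $\mu_i>0$ and then stabilises; SR = recurrent state of this chain. An $n$-parking function is $q=(q_1,\dots,q_n)\in\mathbb{N}^n$ (positive integers) whose non-decreasing rearrangement $\bar q$ satisfies $\bar q_i\le i$ for all $i$; $\mathrm{PF}_n$ is the set of these, and $\mathrm{conv}$ denotes convex hull. *)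

theory Defs
  imports "HOL-Analysis.Analysis" "HOL-Library.Multiset"
begin

(* Graph K_n^0: non-sink vertices are the elements of the finite type 'n, n = CARD('n);
   the sink is an extra vertex not in 'n. Every non-sink vertex has degree n:
   n-1 edges to the other non-sink vertices and one edge to the sink. *)

definition ssm_stable :: "('n::finite \<Rightarrow> nat) \<Rightarrow> bool" where
  "ssm_stable c \<longleftrightarrow> (\<forall>i. c i \<le> CARD('n) - 1)"

(* One SSM toppling with positive probability: an unstable vertex v sends one grain along
   each edge of some subset of its incident edges: S = chosen edges to non-sink neighbours,
   b = whether the edge to the sink is chosen (that grain disappears). *)
definition ssm_topple :: "('n::finite \<Rightarrow> nat) \<Rightarrow> ('n \<Rightarrow> nat) \<Rightarrow> bool" where
  "ssm_topple c c' \<longleftrightarrow>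
     (\<exists>v. CARD('n) \<le> c v \<and>
       (\<exists>S b. S \<subseteq> UNIV - {v} \<and>
          c' = (\<lambda>j. if j = v then c v - (card S + (if b then 1 else 0))
                     else if j \<in> S then c j + 1 else c j)))"

definition ssm_stabilises_to :: "('n::finite \<Rightarrow> nat) \<Rightarrow> ('n \<Rightarrow> nat) \<Rightarrow> bool" where
  "ssm_stabilises_to c d \<longleftrightarrow> ssm_topple\<^sup>*\<^sup>* c d \<and> ssm_stable d"

(* positive-probability transition of the SSM Markov chain (all mu_i > 0) *)
definition ssm_chain_step :: "('n::finite \<Rightarrow> nat) \<Rightarrow> ('n \<Rightarrow> nat) \<Rightarrow> bool" where
  "ssm_chain_step c d \<longleftrightarrow> ssm_stable c \<and> (\<exists>i. ssm_stabilises_to (c(i := c i + 1)) d)"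

(* SR: recurrent state of the (finite) SSM Markov chain on stable configurations *)
definition SSM_recurrent :: "('n::finite \<Rightarrow> nat) \<Rightarrow> bool" where
  "SSM_recurrent c \<longleftrightarrow> ssm_stable c \<and>
     (\<forall>d. ssm_chain_step\<^sup>*\<^sup>* c d \<longrightarrow> ssm_chain_step\<^sup>*\<^sup>* d c)"

definition parking_function :: "('n::finite \<Rightarrow> nat) \<Rightarrow> bool" where
  "parking_function q \<longleftrightarrow> (\<forall>i. 1 \<le> q i) \<and>
     (let qs = sorted_list_of_multiset (image_mset q (mset_set UNIV))
      in \<forall>i < CARD('n). qs ! i \<le> i + 1)"

definition PF_points :: "(real ^ 'n::finite) set" where
  "PF_points = {(\<chi> i. real (q i)) | q. parking_function q}"

end

theory Submission
  imports Defs
begin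

text \<open>
  A stable configuration is recurrent exactly when it is staircase dominant: any \<open>k\<close> vertices
  together hold at least \<open>0 + 1 + \<dots> + (k - 1)\<close> grains. This property survives adding a grain
  and every toppling, and it holds for the maximal configuration, which the chain reaches from
  every stable state. Conversely the chain reaches every staircase dominant stable
  configuration from the maximal one: running a step backwards, one lifts a vertex \<open>u\<close> of
  minimal height to the maximum and takes one grain from each of the highest vertices it could
  have fired into; this keeps staircase dominance and decreases a potential.

  Writing \<open>x = n - c\<close>, staircase dominant stable configurations become the lattice points of
  the polyhedron given by \<open>x\<^sub>i \<ge> 1\<close> and \<open>\<Sum>(n - x\<^sub>i) \<ge> 0 + \<dots> + (|A| - 1)\<close> for every
  vertex set \<open>A\<close>, the sum ranging over \<open>A\<close>; this polyhedron contains
  the parking function polytope. Conversely \<open>x\<close> is itself a parking function if the values of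
  \<open>c\<close> below \<open>n - 1\<close> are pairwise distinct; otherwise it is the midpoint of the two points
  obtained by replacing two equal values \<open>a, a\<close> of \<open>c\<close> by \<open>a - 1, a + 1\<close> and by \<open>a + 1, a - 1\<close>.
  Both stay staircase dominant and have a larger sum of squares, so induction applies.
\<close>

section \<open>The staircase condition\<close>

definition staircase_dominant :: "('a::finite \<Rightarrow> nat) \<Rightarrow> bool" where
  "staircase_dominant c \<longleftrightarrow> (\<forall>A. (\<Sum>m<card A. m) \<le> (\<Sum>i\<in>A. c i))"

lemma staircase_dominantD: "staircase_dominant c \<Longrightarrow> (\<Sum>m<card A. m) \<le> (\<Sum>i\<in>A. c i)"
  unfolding staircase_dominant_def by blast

lemma staircase_dominant_mono:
  assumes "staircase_dominant c" "\<And>i. c i \<le> d i"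
  shows "staircase_dominant d"
  unfolding staircase_dominant_def
  using staircase_dominantD[OF assms(1)] sum_mono[of _ c d] assms(2) order_trans by metis

lemma staircase_dominant_pair:
  assumes "staircase_dominant c" "i \<noteq> j"
  shows "1 \<le> c i + c j"
  using staircase_dominantD[OF assms(1), of "{i, j}"] assms(2) by (simp add: numeral_2_eq_2)

lemma staircase_dominant_if_card_ge:
  fixes c :: "'a::finite \<Rightarrow> nat"
  assumes cnt: "\<And>m. m < CARD('a) \<Longrightarrow> CARD('a) - m \<le> card {i. m \<le> c i}"
  shows "staircase_dominant c"
  unfolding staircase_dominant_def
proof
  fix A :: "'a set"
  show "(\<Sum>m<card A. m) \<le> (\<Sum>i\<in>A. c i)"
  proof (induction "card A" arbitrary: A)
    case 0 then show ?case by simp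
  next
    case (Suc k)
    have k: "k < CARD('a)" using card_mono[of UNIV A] Suc.hyps(2) by simp
    obtain a where a: "a \<in> A" "k \<le> c a"
    proof (rule ccontr)
      assume "\<not> thesis"
      with that have "{i. k \<le> c i} \<subseteq> UNIV - A" by auto
      hence "card {i. k \<le> c i} \<le> CARD('a) - Suc k"
        using card_mono[of "UNIV - A"] Suc.hyps(2) by (simp add: card_Diff_subset)
      with cnt[OF k] k show False by simp
    qed
    have "(\<Sum>m<card (A - {a}). m) \<le> (\<Sum>i\<in>A - {a}. c i)"
      using a Suc by (intro Suc.hyps) simp
    with a Suc.hyps(2)[symmetric] show ?case by (simp add: sum.remove[of A a])
  qed
qed

text \<open>Choose \<open>A\<close> minimising the deficit \<open>\<Sum>\<^sub>A c - (0 + \<dots> + (|A| - 1))\<close> and, among those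
  sets, of maximal size; then neither removing nor adding one vertex lowers the deficit.\<close>

lemma staircase_violator_extremal:
  fixes c :: "'a::finite \<Rightarrow> nat"
  assumes "\<not> staircase_dominant c"
  obtains A where "(\<Sum>i\<in>A. c i) < (\<Sum>m<card A. m)"
    and "\<And>x. x \<in> A \<Longrightarrow> c x < card A" and "\<And>j. j \<notin> A \<Longrightarrow> card A < c j"
proof -
  define deficit where "deficit A = int (\<Sum>i\<in>A. c i) - int (\<Sum>m<card A. m)" for A :: "'a set"
  have deficit_insert: "deficit (insert x B) = deficit B + int (c x) - int (card B)" if "x \<notin> B" for x B
    using that by (simp add: deficit_def)
  define g where "g = Min (range deficit)"
  have g_min: "g \<le> deficit B" for B unfolding g_def by simp
  have "g \<in> range deficit" unfolding g_def by (intro Min_in) auto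
  then obtain A0 where "deficit A0 = g" by auto
  moreover have "card B < Suc CARD('a)" for B :: "'a set"
    by (simp add: card_mono le_imp_less_Suc)
  ultimately obtain A where A: "deficit A = g" and Amax: "\<And>B. deficit B = g \<Longrightarrow> card B \<le> card A"
    using ex_has_greatest_nat[of "\<lambda>B. deficit B = g" A0 card "Suc CARD('a)"] by blast
  show thesis
  proof (rule that)
    obtain B where "(\<Sum>i\<in>B. c i) < (\<Sum>m<card B. m)"
      using assms unfolding staircase_dominant_def by (auto simp: not_le)
    with g_min[of B] A show "(\<Sum>i\<in>A. c i) < (\<Sum>m<card A. m)"
      unfolding deficit_def by linarith
  next
    fix x assume "x \<in> A"
    moreover from this have "0 < card A" by (auto simp: card_gt_0_iff)
    ultimately show "c x < card A"
      using deficit_insert[of x "A - {x}"] g_min[of "A - {x}"] A by (simp add: insert_absorb)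
  next
    fix j assume j: "j \<notin> A"
    have "g < deficit (insert j A)"
      using g_min[of "insert j A"] Amax[of "insert j A"] j by (fastforce simp: order_le_less)
    with deficit_insert[OF j] A show "card A < c j" by simp
  qed
qed

lemma staircase_dominant_spread:
  fixes c :: "'a::finite \<Rightarrow> nat"
  assumes R: "staircase_dominant c" and ij: "i \<noteq> j" "c i = c j" and pos: "1 \<le> c i"
  shows "staircase_dominant (c(i := c i - 1, j := c j + 1))" (is "staircase_dominant ?c'")
  unfolding staircase_dominant_def
proof
  fix A :: "'a set"
  have shift: "(\<Sum>k\<in>A. ?c' k) + (if i \<in> A then 1 else 0) = (\<Sum>k\<in>A. c k) + (if j \<in> A then 1 else 0)"
  proof -
    have "?c' k + (if k = i then 1 else 0) = c k + (if k = j then 1 else 0)" for k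
      using ij pos by auto
    hence "(\<Sum>k\<in>A. ?c' k + (if k = i then 1 else 0)) = (\<Sum>k\<in>A. c k + (if k = j then 1 else 0))"
      by simp
    thus ?thesis by (simp add: sum.distrib)
  qed
  show "(\<Sum>m<card A. m) \<le> (\<Sum>k\<in>A. ?c' k)"
  proof (cases "i \<in> A \<and> j \<notin> A")
    case False
    with shift have "(\<Sum>k\<in>A. c k) \<le> (\<Sum>k\<in>A. ?c' k)" by (auto split: if_splits)
    with staircase_dominantD[OF R, of A] show ?thesis by linarith
  next
    case True
    define B where "B = A - {i}"
    have A: "A = insert i B" "i \<notin> B" "j \<notin> B" using True ij unfolding B_def by auto
    have "(\<Sum>m<card B. m) \<le> (\<Sum>k\<in>B. c k)" by (rule staircase_dominantD[OF R])
    moreover have "(\<Sum>m<card (insert j A). m) \<le> (\<Sum>k\<in>insert j A. c k)"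
      by (rule staircase_dominantD[OF R])
    \<comment> \<open>the bound for \<open>B\<close> settles \<open>|B| < c i\<close>, the bound for \<open>A \<union> {j}\<close> the other case\<close>
    ultimately show ?thesis
      using shift True A ij by (cases "card B < c i") auto
  qed
qed

section \<open>Recurrent states of the stochastic sandpile\<close>

lemma ssm_topple_staircase:
  fixes c :: "'n::finite \<Rightarrow> nat"
  assumes "ssm_topple c c'" and R: "staircase_dominant c"
  shows "staircase_dominant c'"
proof -
  obtain v S b where v: "CARD('n) \<le> c v" and S: "S \<subseteq> UNIV - {v}"
    and c': "c' = (\<lambda>j. if j = v then c v - (card S + (if b then 1 else 0))
                     else if j \<in> S then c j + 1 else c j)"
    using assms(1) unfolding ssm_topple_def by blast
  show ?thesis
    unfolding staircase_dominant_def
  proof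
    fix A :: "'n set"
    show "(\<Sum>m<card A. m) \<le> (\<Sum>i\<in>A. c' i)"
    proof (cases "v \<in> A")
      case False
      then have "(\<Sum>i\<in>A. c i) \<le> (\<Sum>i\<in>A. c' i)" by (intro sum_mono) (auto simp: c')
      with staircase_dominantD[OF R, of A] show ?thesis by linarith
    next
      case True
      define B where "B = A - {v}"
      have A: "A = insert v B" "v \<notin> B" using True unfolding B_def by auto
      have "(\<Sum>i\<in>B. c' i) = (\<Sum>i\<in>B. c i + (if i \<in> S then 1 else 0))"
        using A(2) by (intro sum.cong) (auto simp: c')
      also have "\<dots> = (\<Sum>i\<in>B. c i) + card (B \<inter> S)"
        by (simp add: sum.distrib sum.If_cases)
      finally have sum_B: "(\<Sum>i\<in>B. c' i) = (\<Sum>i\<in>B. c i) + card (B \<inter> S)" .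
      have "S \<subseteq> (B \<inter> S) \<union> (UNIV - A)" using S A by auto
      hence "card S \<le> card (B \<inter> S) + (CARD('n) - card A)"
        using card_mono[of "(B \<inter> S) \<union> (UNIV - A)" S] card_Un_le[of "B \<inter> S" "UNIV - A"]
        by (simp add: card_Diff_subset)
      moreover have "card A \<le> CARD('n)" by (simp add: card_mono)
      \<comment> \<open>\<open>v\<close> keeps at least \<open>n - 1 - |S|\<close> grains, and at most \<open>n - |A|\<close> of those it sent left \<open>A\<close>\<close>
      ultimately have "card B \<le> c' v + card (B \<inter> S)"
        using v A by (auto simp: c')
      with staircase_dominantD[OF R, of B] A sum_B show ?thesis by simp
    qed
  qed
qed

lemma ssm_topple_star_staircase:
  "ssm_topple\<^sup>*\<^sup>* c c' \<Longrightarrow> staircase_dominant c \<Longrightarrow> staircase_dominant c'"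
  by (induction rule: rtranclp_induct) (auto intro: ssm_topple_staircase)

lemma ssm_chain_step_staircase:
  assumes "ssm_chain_step c d" "staircase_dominant c"
  shows "staircase_dominant d"
proof -
  obtain i where "ssm_topple\<^sup>*\<^sup>* (c(i := c i + 1)) d"
    using assms(1) unfolding ssm_chain_step_def ssm_stabilises_to_def by blast
  moreover have "staircase_dominant (c(i := c i + 1))"
    by (rule staircase_dominant_mono[OF assms(2)]) simp
  ultimately show ?thesis by (rule ssm_topple_star_staircase)
qed

lemma ssm_chain_star_staircase:
  "ssm_chain_step\<^sup>*\<^sup>* c d \<Longrightarrow> staircase_dominant c \<Longrightarrow> staircase_dominant d"
  by (induction rule: rtranclp_induct) (auto intro: ssm_chain_step_staircase)

lemma ssm_chain_star_stable: "ssm_chain_step\<^sup>*\<^sup>* c d \<Longrightarrow> ssm_stable c \<Longrightarrow> ssm_stable d"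
  by (induction rule: rtranclp_induct) (auto simp: ssm_chain_step_def ssm_stabilises_to_def)

definition ssm_max :: "'n::finite \<Rightarrow> nat" where
  "ssm_max = (\<lambda>_. CARD('n) - 1)"

lemma staircase_dominant_max: "staircase_dominant (ssm_max :: 'n::finite \<Rightarrow> nat)"
  unfolding staircase_dominant_def ssm_max_def
proof
  fix A :: "'n set"
  have "card A \<le> CARD('n)" by (simp add: card_mono)
  hence "(\<Sum>m<card A. m) \<le> (\<Sum>m<card A. CARD('n) - 1)" by (intro sum_mono) auto
  thus "(\<Sum>m<card A. m) \<le> (\<Sum>i\<in>A. CARD('n) - 1)" by simp
qed

lemma ssm_chain_star_max:
  fixes c :: "'n::finite \<Rightarrow> nat"
  assumes "ssm_stable c"
  shows "ssm_chain_step\<^sup>*\<^sup>* c ssm_max"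
  using assms
proof (induction "\<Sum>i\<in>UNIV. CARD('n) - 1 - c i" arbitrary: c rule: less_induct)
  case less
  show ?case
  proof (cases "c = ssm_max")
    case False
    then obtain j where j: "c j < CARD('n) - 1"
      using less.prems by (auto simp: ssm_max_def ssm_stable_def le_less)
    let ?c = "c(j := c j + 1)"
    have "ssm_chain_step c ?c"
      using less.prems j by (auto simp: ssm_chain_step_def ssm_stabilises_to_def ssm_stable_def)
    moreover have "ssm_chain_step\<^sup>*\<^sup>* ?c ssm_max"
    proof (rule less.hyps)
      show "(\<Sum>i\<in>UNIV. CARD('n) - 1 - ?c i) < (\<Sum>i\<in>UNIV. CARD('n) - 1 - c i)"
        by (rule sum_strict_mono_ex1) (use j in auto)
      show "ssm_stable ?c" using less.prems j by (auto simp: ssm_stable_def)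
    qed
    ultimately show ?thesis by (rule converse_rtranclp_into_rtranclp)
  qed simp
qed

lemma ssm_topple_with_sink:
  fixes c :: "'n::finite \<Rightarrow> nat"
  assumes "CARD('n) \<le> c v" "S \<subseteq> UNIV - {v}"
  shows "ssm_topple c (\<lambda>j. if j = v then c v - (card S + 1) else if j \<in> S then c j + 1 else c j)"
  using assms unfolding ssm_topple_def by (intro exI[of _ v] conjI exI[of _ S] exI[of _ True]) auto

lemma ssm_topple_into_sink:
  fixes c :: "'n::finite \<Rightarrow> nat"
  assumes "CARD('n) \<le> c v"
  shows "ssm_topple c (c(v := c v - 1))"
  using assms unfolding ssm_topple_def
  by (intro exI[of _ v] conjI exI[of _ "{}"] exI[of _ True]) (auto simp: fun_eq_iff)

lemma ssm_topple_star_into_sink: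
  fixes c :: "'n::finite \<Rightarrow> nat"
  assumes "\<And>z. z \<in> W \<Longrightarrow> CARD('n) \<le> c z"
  shows "ssm_topple\<^sup>*\<^sup>* c (\<lambda>j. if j \<in> W then c j - 1 else c j)"
  using finite[of W] assms
proof (induction W arbitrary: c rule: finite_induct)
  case (insert w W)
  have "ssm_topple c (c(w := c w - 1))"
    using insert.prems by (intro ssm_topple_into_sink) simp
  moreover have "ssm_topple\<^sup>*\<^sup>* (c(w := c w - 1))
      (\<lambda>j. if j \<in> W then (c(w := c w - 1)) j - 1 else (c(w := c w - 1)) j)"
    using insert by (intro insert.IH) auto
  moreover have "(\<lambda>j. if j \<in> W then (c(w := c w - 1)) j - 1 else (c(w := c w - 1)) j)
      = (\<lambda>j. if j \<in> insert w W then c j - 1 else c j)"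
    using insert.hyps by auto
  ultimately show ?case by (metis converse_rtranclp_into_rtranclp)
qed simp

text \<open>Adding a grain at a vertex \<open>u\<close> of maximal height and firing it into \<open>T\<close> and the sink;
  the vertices of \<open>W \<subseteq> T\<close> become unstable and pass their extra grain on to the sink.\<close>

lemma ssm_chain_step_fire:
  fixes d :: "'n::finite \<Rightarrow> nat"
  assumes st: "ssm_stable d" and du: "d u = CARD('n) - 1" and T: "T \<subseteq> UNIV - {u}"
    and W: "W \<subseteq> T" "\<And>j. j \<in> W \<Longrightarrow> d j = CARD('n) - 1"
    and TW: "\<And>j. j \<in> T - W \<Longrightarrow> d j < CARD('n) - 1"
  shows "ssm_chain_step d
           (\<lambda>j. if j = u then CARD('n) - 1 - card T else if j \<in> T - W then d j + 1 else d j)"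
proof -
  define d0 where "d0 = d(u := d u + 1)"
  define d1 where "d1 j = (if j = u then d0 u - (card T + 1) else if j \<in> T then d0 j + 1 else d0 j)"
    for j
  define e where "e j = (if j = u then CARD('n) - 1 - card T else if j \<in> T - W then d j + 1 else d j)"
    for j
  have n: "1 \<le> CARD('n)" by (simp add: Suc_leI)
  have "ssm_topple d0 d1"
    unfolding d1_def[abs_def] using du n T by (intro ssm_topple_with_sink) (auto simp: d0_def)
  moreover have "ssm_topple\<^sup>*\<^sup>* d1 (\<lambda>j. if j \<in> W then d1 j - 1 else d1 j)"
    using W T du n by (intro ssm_topple_star_into_sink) (auto simp: d1_def d0_def)
  moreover have "(\<lambda>j. if j \<in> W then d1 j - 1 else d1 j) = e"
    using W T du n by (auto simp: fun_eq_iff d1_def d0_def e_def)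
  moreover have "ssm_stable e"
    using st TW unfolding ssm_stable_def e_def by (auto simp: Suc_le_eq)
  ultimately show ?thesis
    using st unfolding ssm_chain_step_def ssm_stabilises_to_def e_def[abs_def] d0_def
    by (metis converse_rtranclp_into_rtranclp)
qed

definition ssm_unfire :: "('n::finite \<Rightarrow> nat) \<Rightarrow> 'n \<Rightarrow> 'n set \<Rightarrow> 'n \<Rightarrow> nat" where
  "ssm_unfire d u T = (\<lambda>j. if j = u then CARD('n) - 1 else if j \<in> T then d j - 1 else d j)"

lemma ssm_stable_ssm_unfire:
  fixes d :: "'n::finite \<Rightarrow> nat"
  assumes "ssm_stable d"
  shows "ssm_stable (ssm_unfire d u T)"
  unfolding ssm_stable_def
proof
  fix j
  show "ssm_unfire d u T j \<le> CARD('n) - 1"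
    using assms[unfolded ssm_stable_def, rule_format, of j] by (auto simp: ssm_unfire_def)
qed

lemma card_maximal_plus_card_submaximal:
  fixes d :: "'n::finite \<Rightarrow> nat"
  assumes "ssm_stable d"
  shows "card {j. j \<noteq> u \<and> d j = CARD('n) - 1} + card {j. j \<noteq> u \<and> d j < CARD('n) - 1}
           = CARD('n) - 1"
proof -
  define Z N where "Z = {j. j \<noteq> u \<and> d j = CARD('n) - 1}" and "N = {j. j \<noteq> u \<and> d j < CARD('n) - 1}"
  have "Z \<union> N = UNIV - {u}"
    using assms[unfolded ssm_stable_def, rule_format] unfolding Z_def N_def by (auto simp: order_less_le)
  moreover have "Z \<inter> N = {}" unfolding Z_def N_def by auto
  ultimately have "card Z + card N = card (UNIV - {u})" by (metis card_Un_disjoint finite)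
  thus ?thesis unfolding Z_def N_def by (simp add: card_Diff_subset)
qed

lemma sum_ssm_unfire:
  fixes d :: "'n::finite \<Rightarrow> nat"
  assumes "ssm_stable d" "u \<notin> T" "\<And>j. j \<in> T \<Longrightarrow> 1 \<le> d j"
  shows "(\<Sum>j\<in>B. ssm_unfire d u T j) + card (B \<inter> T)
           = (\<Sum>j\<in>B. d j) + (if u \<in> B then CARD('n) - 1 - d u else 0)"
proof -
  have "ssm_unfire d u T j + (if j \<in> T then 1 else 0) = d j + (if j = u then CARD('n) - 1 - d u else 0)"
    for j
    using assms(2) assms(3)[of j] assms(1)[unfolded ssm_stable_def, rule_format, of u]
    by (auto simp: ssm_unfire_def)
  hence "(\<Sum>j\<in>B. ssm_unfire d u T j + (if j \<in> T then 1 else 0))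
           = (\<Sum>j\<in>B. d j + (if j = u then CARD('n) - 1 - d u else 0))"
    by simp
  thus ?thesis by (simp add: sum.distrib sum.If_cases Int_commute)
qed

lemma card_extremal_violator_ssm_unfire:
  fixes d :: "'n::finite \<Rightarrow> nat" and u :: 'n
  defines "Z \<equiv> {j. j \<noteq> u \<and> d j = CARD('n) - 1}" and "N \<equiv> {j. j \<noteq> u \<and> d j < CARD('n) - 1}"
  assumes st: "ssm_stable d"
    and T: "T \<subseteq> N" "\<And>j. j \<in> T \<Longrightarrow> 1 \<le> d j"
    and full: "T \<noteq> {} \<Longrightarrow> d u + card Z + card T = CARD('n) - 1"
    and top: "\<And>x y. x \<in> N - T \<Longrightarrow> y \<in> T \<Longrightarrow> d x \<le> d y"
    and A: "u \<notin> A" "t \<in> A" "t \<in> T"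
    and small: "\<And>x. x \<in> A \<Longrightarrow> ssm_unfire d u T x < card A"
    and large: "\<And>j. j \<notin> A \<Longrightarrow> card A < ssm_unfire d u T j"
  shows "card A = d u + card (A \<inter> T)"
proof -
  have uT: "u \<notin> T" using T(1) unfolding N_def by auto
  have dt: "d t \<le> card A"
    using small[OF A(2)] A(3) uT T(2)[OF A(3)] by (auto simp: ssm_unfire_def split: if_splits)
  have "card A \<le> card (UNIV - {u})" using A(1) by (intro card_mono) auto
  hence kn: "card A \<le> CARD('n) - 1" by (simp add: card_Diff_subset)
  have "j \<notin> A" if "j \<in> Z" for j
  proof
    assume "j \<in> A"
    moreover have "j \<notin> T" "j \<noteq> u" "d j = CARD('n) - 1"
      using T(1) that unfolding Z_def N_def by auto
    ultimately show False using small[of j] kn by (simp add: ssm_unfire_def)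
  qed
  have "A \<subseteq> N"
  proof
    fix j assume "j \<in> A"
    with \<open>\<And>j. j \<in> Z \<Longrightarrow> j \<notin> A\<close> have "j \<notin> Z" by blast
    with A(1) \<open>j \<in> A\<close> have "j \<noteq> u" "d j \<noteq> CARD('n) - 1" unfolding Z_def by auto
    moreover have "d j \<le> CARD('n) - 1" using st by (simp add: ssm_stable_def)
    ultimately show "j \<in> N" unfolding N_def by simp
  qed
  moreover have "j \<in> A" if j: "j \<in> N - T" for j
  proof (rule ccontr)
    assume "j \<notin> A"
    moreover have "j \<noteq> u" "j \<notin> T" using j unfolding N_def by auto
    ultimately have "card A < d j" using large[of j] by (simp add: ssm_unfire_def)
    moreover have "d j \<le> d t" using top j A(3) by blast
    ultimately show False using dt by simp
  qed
  ultimately have A_split: "A = (N - T) \<union> (A \<inter> T)" by blast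
  have "card ((N - T) \<union> (A \<inter> T)) = card (N - T) + card (A \<inter> T)"
    by (rule card_Un_disjoint) auto
  hence "card A = card (N - T) + card (A \<inter> T)" by (metis A_split)
  hence "card A = card N - card T + card (A \<inter> T)"
    using T(1) by (simp add: card_Diff_subset)
  moreover have "card Z + card N = CARD('n) - 1"
    unfolding Z_def N_def by (rule card_maximal_plus_card_submaximal[OF st])
  moreover have "card T \<le> card N" using T(1) by (simp add: card_mono)
  moreover have "d u + card Z + card T = CARD('n) - 1" using full A(3) by blast
  ultimately show ?thesis by linarith
qed

lemma staircase_dominant_ssm_unfire:
  fixes d :: "'n::finite \<Rightarrow> nat" and u :: 'n
  defines "Z \<equiv> {j. j \<noteq> u \<and> d j = CARD('n) - 1}" and "N \<equiv> {j. j \<noteq> u \<and> d j < CARD('n) - 1}"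
  assumes R: "staircase_dominant d" and st: "ssm_stable d"
    and T: "T \<subseteq> N" "\<And>j. j \<in> T \<Longrightarrow> 1 \<le> d j" "d u + card T \<le> CARD('n) - 1"
    and full: "T \<noteq> {} \<Longrightarrow> d u + card Z + card T = CARD('n) - 1"
    and top: "\<And>x y. x \<in> N - T \<Longrightarrow> y \<in> T \<Longrightarrow> d x \<le> d y"
  shows "staircase_dominant (ssm_unfire d u T)"
proof (rule ccontr)
  let ?d' = "ssm_unfire d u T"
  assume "\<not> staircase_dominant ?d'"
  then obtain A where viol: "(\<Sum>i\<in>A. ?d' i) < (\<Sum>m<card A. m)"
    and small: "\<And>x. x \<in> A \<Longrightarrow> ?d' x < card A" and large: "\<And>j. j \<notin> A \<Longrightarrow> card A < ?d' j"
    by (rule staircase_violator_extremal) blast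
  have uT: "u \<notin> T" using T(1) unfolding N_def by auto
  note sums = sum_ssm_unfire[OF st uT T(2)]
  have uA: "u \<notin> A"
  proof
    assume "u \<in> A"
    with sums[of A] T(3) card_mono[of T "A \<inter> T"] have "(\<Sum>i\<in>A. d i) \<le> (\<Sum>i\<in>A. ?d' i)"
      by auto
    with viol staircase_dominantD[OF R, of A] show False by linarith
  qed
  with sums[of A] have sum_A: "(\<Sum>i\<in>A. ?d' i) + card (A \<inter> T) = (\<Sum>i\<in>A. d i)" by simp
  have "A \<inter> T \<noteq> {}"
  proof
    assume "A \<inter> T = {}"
    with sum_A viol staircase_dominantD[OF R, of A] show False by simp
  qed
  then obtain t where t: "t \<in> A" "t \<in> T" by blast
  have "card A = d u + card (A \<inter> T)"
    using st T(1,2) full top uA t small large unfolding Z_def N_def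
    by (rule card_extremal_violator_ssm_unfire)
  moreover have "(\<Sum>m<Suc (card A). m) \<le> (\<Sum>i\<in>A. d i) + d u"
    using staircase_dominantD[OF R, of "insert u A"] uA by simp
  ultimately show False using sum_A viol by simp
qed

text \<open>The second summand makes the defect drop under \<open>ssm_unfire d u T\<close> even when \<open>T\<close> gives
  back all \<open>n - 1 - d u\<close> grains that \<open>u\<close> gains.\<close>

definition ssm_defect :: "('n::finite \<Rightarrow> nat) \<Rightarrow> nat" where
  "ssm_defect c = (\<Sum>i\<in>UNIV. (CARD('n) - 1 - c i) + (if c i < CARD('n) - 1 then 1 else 0))"

lemma ssm_defect_ssm_unfire:
  fixes d :: "'n::finite \<Rightarrow> nat"
  assumes "d u < CARD('n) - 1" "T \<subseteq> {j. j \<noteq> u \<and> d j < CARD('n) - 1}"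
    and "\<And>j. j \<in> T \<Longrightarrow> 1 \<le> d j"
  shows "ssm_defect (ssm_unfire d u T) + (CARD('n) - d u) = ssm_defect d + card T"
proof -
  let ?t = "\<lambda>c i. (CARD('n) - 1 - c i) + (if c i < CARD('n) - 1 then 1 else 0)"
  have "?t (ssm_unfire d u T) i + (if i = u then CARD('n) - d u else 0) = ?t d i + (if i \<in> T then 1 else 0)"
    for i using assms(1,2) assms(3)[of i] by (auto simp: ssm_unfire_def)
  hence "(\<Sum>i\<in>UNIV. ?t (ssm_unfire d u T) i + (if i = u then CARD('n) - d u else 0))
       = (\<Sum>i\<in>UNIV. ?t d i + (if i \<in> T then 1 else 0))"
    by simp
  thus ?thesis unfolding ssm_defect_def by (simp add: sum.distrib sum.If_cases)
qed

lemma ssm_chain_step_ssm_unfire: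
  fixes d :: "'n::finite \<Rightarrow> nat"
  assumes st: "ssm_stable d" and u: "u \<notin> W" "u \<notin> T" and WT: "W \<inter> T = {}"
    and W: "\<And>j. j \<in> W \<Longrightarrow> d j = CARD('n) - 1"
    and T: "\<And>j. j \<in> T \<Longrightarrow> 1 \<le> d j \<and> d j < CARD('n) - 1"
    and card: "d u + card W + card T = CARD('n) - 1"
  shows "ssm_chain_step (ssm_unfire d u T) d"
proof -
  let ?d' = "ssm_unfire d u T"
  have "ssm_chain_step ?d' (\<lambda>j. if j = u then CARD('n) - 1 - card (W \<union> T)
                               else if j \<in> (W \<union> T) - W then ?d' j + 1 else ?d' j)"
  proof (rule ssm_chain_step_fire[OF ssm_stable_ssm_unfire[OF st]])
    show "?d' u = CARD('n) - 1" "W \<union> T \<subseteq> UNIV - {u}" "W \<subseteq> W \<union> T"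
      using u by (auto simp: ssm_unfire_def)
    show "?d' j = CARD('n) - 1" if "j \<in> W" for j
      using that W[of j] u WT by (auto simp: ssm_unfire_def)
    show "?d' j < CARD('n) - 1" if "j \<in> W \<union> T - W" for j
      using that T[of j] u by (auto simp: ssm_unfire_def)
  qed
  moreover have "(\<lambda>j. if j = u then CARD('n) - 1 - card (W \<union> T)
                       else if j \<in> (W \<union> T) - W then ?d' j + 1 else ?d' j) = d"
  proof
    fix j
    have "card (W \<union> T) = card W + card T" using WT by (simp add: card_Un_disjoint)
    thus "(if j = u then CARD('n) - 1 - card (W \<union> T) else if j \<in> (W \<union> T) - W then ?d' j + 1 else ?d' j)
          = d j"
      using card T[of j] u WT by (auto simp: ssm_unfire_def)
  qed
  ultimately show ?thesis by simp
qed

lemma obtain_top_subset: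
  fixes f :: "'a \<Rightarrow> 'b::linorder"
  assumes "finite X" "r \<le> card X"
  obtains Y where "Y \<subseteq> X" "card Y = r" "\<And>x y. x \<in> X - Y \<Longrightarrow> y \<in> Y \<Longrightarrow> f x \<le> f y"
  using assms(2)
proof (induction r arbitrary: thesis)
  case (Suc r)
  then obtain Y where Y: "Y \<subseteq> X" "card Y = r" "\<And>x y. x \<in> X - Y \<Longrightarrow> y \<in> Y \<Longrightarrow> f x \<le> f y"
    by (metis Suc_leD)
  have "finite (X - Y)" "X - Y \<noteq> {}"
    using assms(1) Y(1,2) Suc.prems(2) card_mono[of Y X] by (auto simp: subset_antisym)
  then obtain z where z: "z \<in> X - Y" "\<And>x. x \<in> X - Y \<Longrightarrow> f x \<le> f z"
    using Max_in[of "f ` (X - Y)"] by (metis (no_types, lifting) Max_ge finite_imageI image_iff image_is_empty)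
  show ?case
  proof (rule Suc.prems(1))
    show "insert z Y \<subseteq> X" "card (insert z Y) = Suc r"
      using z(1) Y(1,2) finite_subset[OF Y(1) assms(1)] by auto
    show "f x \<le> f y" if "x \<in> X - insert z Y" "y \<in> insert z Y" for x y
      using that z Y(3) by auto
  qed
qed (metis card.empty empty_iff empty_subsetI)

lemma obtain_subsets_filling_top:
  fixes f :: "'a \<Rightarrow> 'b::linorder"
  assumes "finite Z" "finite N" "h \<le> card Z + card N"
  obtains W T where "W \<subseteq> Z" "T \<subseteq> N" "card W + card T = h" "T \<noteq> {} \<Longrightarrow> W = Z"
    "\<And>x y. x \<in> N - T \<Longrightarrow> y \<in> T \<Longrightarrow> f x \<le> f y"
proof (cases "h \<le> card Z")
  case True
  then obtain W where "W \<subseteq> Z" "card W = h" by (meson obtain_subset_with_card_n)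
  with that[of W "{}"] show thesis by simp
next
  case False
  with assms(3) have "h - card Z \<le> card N" by linarith
  then obtain T where "T \<subseteq> N" "card T = h - card Z"
    "\<And>x y. x \<in> N - T \<Longrightarrow> y \<in> T \<Longrightarrow> f x \<le> f y"
    using obtain_top_subset[OF assms(2)] by blast
  with that[of Z T] False show thesis by simp
qed

lemma ssm_chain_step_predecessor:
  fixes d :: "'n::finite \<Rightarrow> nat"
  assumes st: "ssm_stable d" and R: "staircase_dominant d" and "d \<noteq> ssm_max"
  obtains d' where "ssm_stable d'" "staircase_dominant d'" "ssm_defect d' < ssm_defect d"
    "ssm_chain_step d' d"
proof -
  let ?n = "CARD('n)"
  have dle: "d j \<le> ?n - 1" for j using st unfolding ssm_stable_def by simp
  obtain u where umin: "\<And>j. d u \<le> d j"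
    using ex_has_least_nat[of "\<lambda>_. True" undefined d] by blast
  obtain j where "d j \<noteq> ?n - 1" using assms(3) by (auto simp: ssm_max_def fun_eq_iff)
  with dle[of j] umin[of j] have du: "d u < ?n - 1" by linarith
  define Z where "Z = {j. j \<noteq> u \<and> d j = ?n - 1}"
  define N where "N = {j. j \<noteq> u \<and> d j < ?n - 1}"
  have ZN: "card Z + card N = ?n - 1"
    unfolding Z_def N_def by (rule card_maximal_plus_card_submaximal[OF st])
  text \<open>Fire \<open>u\<close> into \<open>?n - 1 - d u\<close> vertices: maximal ones first, then the highest others.\<close>
  have "?n - 1 - d u \<le> card Z + card N" using ZN by linarith
  then obtain W T where W: "W \<subseteq> Z" and T: "T \<subseteq> N" and WT: "card W + card T = ?n - 1 - d u"
    and full: "T \<noteq> {} \<Longrightarrow> W = Z" and top: "\<And>x y. x \<in> N - T \<Longrightarrow> y \<in> T \<Longrightarrow> d x \<le> d y"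
    by (rule obtain_subsets_filling_top[OF finite finite, where f = d]) blast
  have "Z \<inter> N = {}" unfolding Z_def N_def by auto
  with W T have uWT: "u \<notin> W" "u \<notin> T" "W \<inter> T = {}" unfolding Z_def N_def by blast+
  have Tpos: "1 \<le> d j" if "j \<in> T" for j
  proof -
    have "1 \<le> d u + d j" by (rule staircase_dominant_pair[OF R]) (use uWT that in auto)
    with umin[of j] show ?thesis by linarith
  qed
  show thesis
  proof
    show "ssm_stable (ssm_unfire d u T)" by (rule ssm_stable_ssm_unfire[OF st])
    show "ssm_chain_step (ssm_unfire d u T) d"
      using W T Tpos WT du unfolding Z_def N_def
      by (intro ssm_chain_step_ssm_unfire[OF st uWT]) auto
    show "staircase_dominant (ssm_unfire d u T)"
    proof (rule staircase_dominant_ssm_unfire[OF R st])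
      show "T \<subseteq> {j. j \<noteq> u \<and> d j < ?n - 1}" using T unfolding N_def .
      show "d u + card T \<le> ?n - 1" using WT du by linarith
      show "d u + card {j. j \<noteq> u \<and> d j = ?n - 1} + card T = ?n - 1" if "T \<noteq> {}"
        using full[OF that] WT du unfolding Z_def by simp
    qed (use Tpos top in \<open>auto simp: N_def\<close>)
    have "card T \<le> ?n - 1 - d u" using WT by simp
    with ssm_defect_ssm_unfire[of d u T] T Tpos du
    show "ssm_defect (ssm_unfire d u T) < ssm_defect d" unfolding N_def by auto
  qed
qed

lemma ssm_chain_star_from_max:
  fixes d :: "'n::finite \<Rightarrow> nat"
  assumes "ssm_stable d" "staircase_dominant d"
  shows "ssm_chain_step\<^sup>*\<^sup>* ssm_max d"
  using assms
proof (induction "ssm_defect d" arbitrary: d rule: less_induct)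
  case less
  show ?case
  proof (cases "d = ssm_max")
    case False
    with less.prems obtain d' where "ssm_stable d'" "staircase_dominant d'"
      "ssm_defect d' < ssm_defect d" "ssm_chain_step d' d"
      by (rule ssm_chain_step_predecessor)
    with less.hyps show ?thesis by (meson rtranclp.rtrancl_into_rtrancl)
  qed simp
qed

theorem SSM_recurrent_iff:
  "SSM_recurrent (c :: 'n::finite \<Rightarrow> nat) \<longleftrightarrow> ssm_stable c \<and> staircase_dominant c"
proof
  assume rec: "SSM_recurrent c"
  hence st: "ssm_stable c" unfolding SSM_recurrent_def by simp
  with rec have "ssm_chain_step\<^sup>*\<^sup>* ssm_max c"
    using ssm_chain_star_max unfolding SSM_recurrent_def by blast
  with st show "ssm_stable c \<and> staircase_dominant c"
    using ssm_chain_star_staircase staircase_dominant_max by blast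
next
  assume "ssm_stable c \<and> staircase_dominant c"
  then show "SSM_recurrent c"
    unfolding SSM_recurrent_def
    using ssm_chain_star_stable ssm_chain_star_max ssm_chain_star_from_max
    by (meson rtranclp_trans)
qed

section \<open>Parking functions\<close>

lemma sorted_nth_le_iff_card:
  fixes xs :: "'a::linorder list"
  assumes "sorted xs" "i < length xs"
  shows "xs ! i \<le> t \<longleftrightarrow> i < card {l. l < length xs \<and> xs ! l \<le> t}"
proof
  assume "xs ! i \<le> t"
  with assms have "{..i} \<subseteq> {l. l < length xs \<and> xs ! l \<le> t}"
    using sorted_nth_mono by fastforce
  from card_mono[OF _ this] show "i < card {l. l < length xs \<and> xs ! l \<le> t}" by simp
next
  assume "i < card {l. l < length xs \<and> xs ! l \<le> t}"
  moreover have "\<not> xs ! i \<le> t \<Longrightarrow> {l. l < length xs \<and> xs ! l \<le> t} \<subseteq> {..<i}"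
    using assms sorted_nth_mono by (fastforce simp: not_le)
  ultimately show "xs ! i \<le> t"
    using card_mono[of "{..<i}" "{l. l < length xs \<and> xs ! l \<le> t}"] by fastforce
qed

lemma parking_function_iff_card:
  "parking_function (q :: 'n::finite \<Rightarrow> nat) \<longleftrightarrow>
     (\<forall>i. 1 \<le> q i) \<and> (\<forall>j < CARD('n). j < card {i. q i \<le> j + 1})"
proof -
  define qs where "qs = sorted_list_of_multiset (image_mset q (mset_set (UNIV :: 'n set)))"
  have m: "mset qs = image_mset q (mset_set UNIV)" unfolding qs_def by simp
  have len: "length qs = CARD('n)" using arg_cong[OF m, of size] by simp
  have count: "card {l. l < length qs \<and> qs ! l \<le> t} = card {i. q i \<le> t}" for t
  proof -
    have "card {l. l < length qs \<and> qs ! l \<le> t} = length (filter (\<lambda>v. v \<le> t) qs)"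
      by (simp add: length_filter_conv_card)
    also have "\<dots> = size (mset (filter (\<lambda>v. v \<le> t) qs))" by (rule size_mset[symmetric])
    also have "\<dots> = card {i. q i \<le> t}"
      unfolding mset_filter m by (simp add: filter_mset_image_mset)
    finally show ?thesis .
  qed
  have "sorted qs" unfolding qs_def by simp
  with len count have "(\<forall>i < CARD('n). qs ! i \<le> i + 1)
      \<longleftrightarrow> (\<forall>j < CARD('n). j < card {i. q i \<le> j + 1})"
    using sorted_nth_le_iff_card[of qs] by simp
  thus ?thesis unfolding parking_function_def Let_def qs_def by simp
qed

lemma parking_function_le_card:
  assumes "parking_function (q :: 'n::finite \<Rightarrow> nat)"
  shows "q i \<le> CARD('n)"
proof -
  have "CARD('n) - 1 < CARD('n)" by simp
  with assms have "CARD('n) - 1 < card {i. q i \<le> CARD('n) - 1 + 1}"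
    unfolding parking_function_iff_card by blast
  hence "CARD('n) - 1 < card {i. q i \<le> CARD('n)}" by simp
  hence "{i. q i \<le> CARD('n)} = UNIV" by (intro card_seteq) auto
  thus ?thesis by auto
qed

lemma staircase_dominant_parking_function:
  assumes pf: "parking_function (q :: 'n::finite \<Rightarrow> nat)"
  shows "staircase_dominant (\<lambda>i. CARD('n) - q i)"
proof (rule staircase_dominant_if_card_ge)
  fix m assume m: "m < CARD('n)"
  have "m \<le> CARD('n) - q i \<longleftrightarrow> q i \<le> (CARD('n) - m - 1) + 1" for i
    using parking_function_le_card[OF pf, of i] m by arith
  hence "{i. m \<le> CARD('n) - q i} = {i. q i \<le> (CARD('n) - m - 1) + 1}" by simp
  moreover have "CARD('n) - m - 1 < card {i. q i \<le> (CARD('n) - m - 1) + 1}"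
    using pf m unfolding parking_function_iff_card by auto
  ultimately show "CARD('n) - m \<le> card {i. m \<le> CARD('n) - q i}" by simp
qed

lemma parking_function_if_distinct:
  fixes c :: "'n::finite \<Rightarrow> nat"
  assumes st: "ssm_stable c"
    and dist: "\<And>i j. i \<noteq> j \<Longrightarrow> c i < CARD('n) - 1 \<Longrightarrow> c i \<noteq> c j"
  shows "parking_function (\<lambda>i. CARD('n) - c i)"
  unfolding parking_function_iff_card
proof (intro conjI allI impI)
  have cle: "c i \<le> CARD('n) - 1" for i using st unfolding ssm_stable_def by simp
  show "1 \<le> CARD('n) - c i" for i using cle[of i] zero_less_card_finite[where 'a='n] by linarith
  fix j assume j: "j < CARD('n)"
  define B where "B = {i. c i < CARD('n) - j - 1}"
  have "inj_on c B" unfolding B_def inj_on_def using dist by fastforce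
  moreover have "c ` B \<subseteq> {..< CARD('n) - j - 1}" unfolding B_def by auto
  ultimately have "card B \<le> CARD('n) - j - 1" using card_inj_on_le[of c B "{..< CARD('n) - j - 1}"] by simp
  moreover have "CARD('n) - c i \<le> j + 1 \<longleftrightarrow> i \<notin> B" for i
    using cle[of i] j unfolding B_def by auto
  hence "{i. CARD('n) - c i \<le> j + 1} = UNIV - B" by auto
  ultimately show "j < card {i. CARD('n) - c i \<le> j + 1}" using j by (simp add: card_Diff_subset)
qed

section \<open>Lattice points of the parking function polytope\<close>

definition ssm_vec :: "('n::finite \<Rightarrow> nat) \<Rightarrow> real^'n" where
  "ssm_vec c = (\<chi> i. real (CARD('n) - c i))"

definition staircase_polyhedron :: "(real^'n::finite) set" where
  "staircase_polyhedron = {x. (\<forall>i. 1 \<le> x $ i) \<and>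
     (\<forall>A. real (\<Sum>m<card A. m) \<le> (\<Sum>i\<in>A. real CARD('n) - x $ i))}"

lemma convex_staircase_polyhedron: "convex (staircase_polyhedron :: (real^'n::finite) set)"
proof (rule convexI)
  fix x y :: "real^'n" and u v :: real
  assume x: "x \<in> staircase_polyhedron" and y: "y \<in> staircase_polyhedron"
    and uv: "0 \<le> u" "0 \<le> v" "u + v = 1"
  show "u *\<^sub>R x + v *\<^sub>R y \<in> staircase_polyhedron"
    unfolding staircase_polyhedron_def
  proof (intro CollectI conjI allI)
    fix i
    have "u * 1 + v * 1 \<le> u * x $ i + v * y $ i"
      using x y uv by (intro add_mono mult_left_mono) (auto simp: staircase_polyhedron_def)
    with uv(3) show "1 \<le> (u *\<^sub>R x + v *\<^sub>R y) $ i" by simp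
  next
    fix A :: "'n set"
    let ?K = "real (\<Sum>m<card A. m)" and ?n = "real CARD('n)"
    have v: "v = 1 - u" using uv(3) by simp
    have "?n - (u *\<^sub>R x + v *\<^sub>R y) $ i = u * (?n - x $ i) + v * (?n - y $ i)" for i
      by (simp add: v algebra_simps)
    hence "(\<Sum>i\<in>A. ?n - (u *\<^sub>R x + v *\<^sub>R y) $ i)
         = u * (\<Sum>i\<in>A. ?n - x $ i) + v * (\<Sum>i\<in>A. ?n - y $ i)"
      by (simp add: sum.distrib sum_distrib_left)
    moreover have "u * ?K + v * ?K \<le> u * (\<Sum>i\<in>A. ?n - x $ i) + v * (\<Sum>i\<in>A. ?n - y $ i)"
      using x y uv by (intro add_mono mult_left_mono) (auto simp: staircase_polyhedron_def)
    ultimately show "?K \<le> (\<Sum>i\<in>A. ?n - (u *\<^sub>R x + v *\<^sub>R y) $ i)"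
      using uv(3) by (simp add: distrib_right[symmetric])
  qed
qed

lemma PF_points_subset_staircase_polyhedron: "PF_points \<subseteq> staircase_polyhedron"
proof
  fix x :: "real^'n" assume "x \<in> PF_points"
  then obtain q where q: "parking_function q" and x: "x = (\<chi> i. real (q i))"
    unfolding PF_points_def by blast
  show "x \<in> staircase_polyhedron"
    unfolding staircase_polyhedron_def
  proof (intro CollectI conjI allI)
    show "1 \<le> x $ i" for i using q unfolding parking_function_iff_card x by simp
    fix A :: "'n set"
    have "real (\<Sum>m<card A. m) \<le> real (\<Sum>i\<in>A. CARD('n) - q i)"
      using staircase_dominantD[OF staircase_dominant_parking_function[OF q]] by (simp only: of_nat_le_iff)
    also have "\<dots> = (\<Sum>i\<in>A. real CARD('n) - x $ i)"
      using parking_function_le_card[OF q] by (simp add: x)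
    finally show "real (\<Sum>m<card A. m) \<le> (\<Sum>i\<in>A. real CARD('n) - x $ i)" .
  qed
qed

lemma lattice_point_staircase_polyhedron:
  fixes x :: "real^'n::finite"
  assumes x: "x \<in> staircase_polyhedron" and int: "\<forall>i. x $ i \<in> \<int>"
  shows "x \<in> ssm_vec ` {c. ssm_stable c \<and> staircase_dominant c}"
proof
  let ?n = "real CARD('n)"
  have ge: "1 \<le> x $ i" for i using x unfolding staircase_polyhedron_def by blast
  have "real (\<Sum>m<card {i}. m) \<le> (\<Sum>k\<in>{i}. ?n - x $ k)" for i
    using x unfolding staircase_polyhedron_def by blast
  hence le: "x $ i \<le> ?n" for i by simp
  define c where "c i = nat \<lfloor>?n - x $ i\<rfloor>" for i
  have rc: "real (c i) = ?n - x $ i" for i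
  proof -
    obtain z where z: "?n - x $ i = of_int z" using int by (metis Ints_cases Ints_diff Ints_of_nat)
    with le[of i] show ?thesis by (simp add: c_def)
  qed
  have cle: "c i \<le> CARD('n) - 1" for i
  proof -
    have "real (c i + 1) \<le> real CARD('n)" using rc[of i] ge[of i] by simp
    thus ?thesis by (simp only: of_nat_le_iff)
  qed
  show "x = ssm_vec c"
    unfolding vec_eq_iff
  proof
    fix i
    have "c i \<le> CARD('n)" using cle[of i] by simp
    with rc[of i] show "x $ i = ssm_vec c $ i" by (simp add: ssm_vec_def)
  qed
  have "staircase_dominant c"
    unfolding staircase_dominant_def
  proof
    fix A :: "'n set"
    have "real (\<Sum>m<card A. m) \<le> (\<Sum>i\<in>A. ?n - x $ i)"
      using x unfolding staircase_polyhedron_def by blast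
    also have "\<dots> = real (\<Sum>i\<in>A. c i)" using rc by simp
    finally show "(\<Sum>m<card A. m) \<le> (\<Sum>i\<in>A. c i)" by (simp only: of_nat_le_iff)
  qed
  with cle show "c \<in> {c. ssm_stable c \<and> staircase_dominant c}"
    by (simp add: ssm_stable_def)
qed

lemma sum_squares_spread:
  fixes c :: "'a::finite \<Rightarrow> nat"
  assumes "i \<noteq> j" "c i = c j" "1 \<le> c i"
  shows "(\<Sum>k\<in>UNIV. (c(i := c i - 1, j := c j + 1)) k ^ 2) = (\<Sum>k\<in>UNIV. c k ^ 2) + 2"
proof -
  let ?c' = "c(i := c i - 1, j := c j + 1)"
  define a where "a = c i - 1"
  have a: "c i = Suc a" "c j = Suc a" using assms(2,3) unfolding a_def by auto
  have "?c' k ^ 2 + (if k = i then 2 * c i - 1 else 0) = c k ^ 2 + (if k = j then 2 * c i + 1 else 0)" for k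
    using assms(1) a by (auto simp: power2_eq_square)
  hence "(\<Sum>k\<in>UNIV. ?c' k ^ 2 + (if k = i then 2 * c i - 1 else 0))
       = (\<Sum>k\<in>UNIV. c k ^ 2 + (if k = j then 2 * c i + 1 else 0))"
    by simp
  with assms(3) show ?thesis by (simp add: sum.distrib)
qed

lemma sum_squares_le_of_stable:
  fixes c :: "'n::finite \<Rightarrow> nat"
  assumes "ssm_stable c"
  shows "(\<Sum>k\<in>UNIV. c k ^ 2) \<le> CARD('n) * CARD('n) ^ 2"
proof -
  have "c k \<le> CARD('n)" for k
    using assms unfolding ssm_stable_def by (meson diff_le_self le_trans)
  thus ?thesis
    using sum_bounded_above[of UNIV "\<lambda>k. c k ^ 2" "CARD('n) ^ 2"] by (simp add: power_mono)
qed

lemma ssm_vec_midpoint_spread: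
  fixes c :: "'n::finite \<Rightarrow> nat"
  assumes "i \<noteq> j" "c i = c j" "1 \<le> c i" "c i < CARD('n) - 1"
  shows "ssm_vec c = (1/2) *\<^sub>R ssm_vec (c(i := c i - 1, j := c j + 1))
                   + (1/2) *\<^sub>R ssm_vec (c(j := c j - 1, i := c i + 1))"
  using assms by (auto simp: vec_eq_iff ssm_vec_def field_simps)

lemma ssm_vec_in_convex_hull_PF_points:
  fixes c :: "'n::finite \<Rightarrow> nat"
  assumes "ssm_stable c" "staircase_dominant c"
  shows "ssm_vec c \<in> convex hull PF_points"
  using assms
proof (induction "CARD('n) * CARD('n) ^ 2 - (\<Sum>k\<in>UNIV. c k ^ 2)" arbitrary: c rule: less_induct)
  case less
  have spread: "ssm_vec (c(i := c i - 1, j := c j + 1)) \<in> convex hull PF_points"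
    if ij: "i \<noteq> j" "c i = c j" "c i < CARD('n) - 1" for i j
  proof (rule less.hyps)
    let ?c' = "c(i := c i - 1, j := c j + 1)"
    have pos: "1 \<le> c i" using staircase_dominant_pair[OF less.prems(2) ij(1)] ij(2) by simp
    show "ssm_stable ?c'" using less.prems(1) ij unfolding ssm_stable_def by auto
    show "staircase_dominant ?c'" by (rule staircase_dominant_spread[OF less.prems(2) ij(1,2) pos])
    from sum_squares_le_of_stable[OF \<open>ssm_stable ?c'\<close>] sum_squares_spread[OF ij(1,2) pos]
    show "CARD('n) * CARD('n) ^ 2 - (\<Sum>k\<in>UNIV. ?c' k ^ 2) < CARD('n) * CARD('n) ^ 2 - (\<Sum>k\<in>UNIV. c k ^ 2)"
      by simp
  qed
  show ?case
  proof (cases "\<exists>i j. i \<noteq> j \<and> c i = c j \<and> c i < CARD('n) - 1")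
    case True
    then obtain i j where ij: "i \<noteq> j" "c i = c j" "c i < CARD('n) - 1" by blast
    have pos: "1 \<le> c i" using staircase_dominant_pair[OF less.prems(2) ij(1)] ij(2) by simp
    note ssm_vec_midpoint_spread[OF ij(1,2) pos ij(3)]
    moreover have "ssm_vec (c(j := c j - 1, i := c i + 1)) \<in> convex hull PF_points"
      using spread[of j i] ij by simp
    ultimately show ?thesis
      using spread[OF ij] by (simp add: convexD[OF convex_convex_hull])
  next
    case False
    hence "parking_function (\<lambda>i. CARD('n) - c i)"
      using less.prems(1) by (intro parking_function_if_distinct) blast+
    hence "ssm_vec c \<in> PF_points"
      unfolding PF_points_def ssm_vec_def by (intro CollectI exI[of _ "\<lambda>i. CARD('n) - c i"]) simp
    thus ?thesis by (rule hull_inc)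
  qed
qed

lemma inj_on_ssm_vec: "inj_on ssm_vec {c :: 'n::finite \<Rightarrow> nat. ssm_stable c}"
proof (rule inj_onI)
  fix c d :: "'n \<Rightarrow> nat"
  assume st: "c \<in> {c. ssm_stable c}" "d \<in> {c. ssm_stable c}" and eq: "ssm_vec c = ssm_vec d"
  show "c = d"
  proof
    fix i
    have "CARD('n) - c i = CARD('n) - d i"
      using arg_cong[OF eq, of "\<lambda>x. x $ i"] by (simp add: ssm_vec_def)
    moreover have "c i \<le> CARD('n) - 1" "d i \<le> CARD('n) - 1" using st by (simp_all add: ssm_stable_def)
    ultimately show "c i = d i" by linarith
  qed
qed

lemma convex_hull_PF_points_subset: "convex hull PF_points \<subseteq> staircase_polyhedron"
  by (intro hull_minimal PF_points_subset_staircase_polyhedron convex_staircase_polyhedron)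

lemma lattice_points_convex_hull_PF_points:
  "{x :: real^'n::finite. x \<in> convex hull PF_points \<and> (\<forall>i. x $ i \<in> \<int>)}
     = ssm_vec ` {c. ssm_stable c \<and> staircase_dominant c}"
proof (intro equalityI subsetI)
  fix x :: "real^'n" assume "x \<in> {x. x \<in> convex hull PF_points \<and> (\<forall>i. x $ i \<in> \<int>)}"
  then show "x \<in> ssm_vec ` {c. ssm_stable c \<and> staircase_dominant c}"
    using convex_hull_PF_points_subset by (auto intro: lattice_point_staircase_polyhedron)
next
  fix x :: "real^'n" assume "x \<in> ssm_vec ` {c. ssm_stable c \<and> staircase_dominant c}"
  then obtain c where c: "x = ssm_vec c" "ssm_stable c" "staircase_dominant c" by blast
  with ssm_vec_in_convex_hull_PF_points[OF c(2,3)]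
  show "x \<in> {x. x \<in> convex hull PF_points \<and> (\<forall>i. x $ i \<in> \<int>)}"
    by (simp add: ssm_vec_def)
qed

theorem corollary4p2:
  shows "card {c :: 'n::finite \<Rightarrow> nat. SSM_recurrent c}
       = card {x :: real ^ 'n. x \<in> convex hull PF_points \<and> (\<forall>i. x $ i \<in> \<int>)}"
proof -
  have "inj_on ssm_vec {c :: 'n \<Rightarrow> nat. ssm_stable c \<and> staircase_dominant c}"
    by (rule inj_on_subset[OF inj_on_ssm_vec]) blast
  then show ?thesis
    unfolding SSM_recurrent_iff lattice_points_convex_hull_PF_points by (simp add: card_image)
qed

end
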